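(* Let $\mathbf{w} = (w_1, w_2, \ldots)$ be a sequence of words in $A^+$ (with $A=\{a,b\}$) such that for every $n \in \mathbb{N}$ there are no $s, t, v \in A^*$ with $w_n = stv$ and $st, tv \in S_{\mathbf{w}}$. For each $n$, let $p_n$ and $s_n$ be respectively the longest prefix and the longest suffix of $w_n$ belonging to $S_{\mathbf{w}}$. Then for every $n$ there exists $u_n \in A^+$ such that $w_n = p_n u_n s_n$.
   Context: $A = \{a,b\}$; $A^*$ is the free monoid on $A$ with empty word $\varepsilon$ (which is a prefix and a suffix of every word), and $A^+ = A^*\setminus\{\varepsilon\}$. For a sequence $\mathbf{w}=(w_1,w_2,\ldots)$ in $A^+$, $S_{\mathbf{w}}$ is the least submonoid $S$ of $A^*$ satisfying: (C1) if $w_n = s v u v s'$ for some $n$, with $s, s' \in S$ and $u, v \in A^*$, then $v \in S$; (C2) if $w_m = s v t$ and $w_n = t' v s'$ for some $m \neq n$, with $s, s' \in S$ and $t, t', v \in A^*$, then $v \in S$. *)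

theory Defs
  imports Main "HOL-Library.Sublist"
begin

datatype letter = a | b

type_synonym word = "letter list"

definition submonoid :: "word set \<Rightarrow> bool" where
  "submonoid S \<longleftrightarrow> [] \<in> S \<and> (\<forall>x\<in>S. \<forall>y\<in>S. x @ y \<in> S)"

definition cond_C1 :: "(nat \<Rightarrow> word) \<Rightarrow> word set \<Rightarrow> bool" where
  "cond_C1 w S \<longleftrightarrow>
     (\<forall>n s v u s'. w n = s @ v @ u @ v @ s' \<and> s \<in> S \<and> s' \<in> S \<longrightarrow> v \<in> S)"

definition cond_C2 :: "(nat \<Rightarrow> word) \<Rightarrow> word set \<Rightarrow> bool" where
  "cond_C2 w S \<longleftrightarrow>
     (\<forall>m n s v t t' s'. m \<noteq> n \<and> w m = s @ v @ t \<and> w n = t' @ v @ s' \<and> s \<in> S \<and> s' \<in> S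
        \<longrightarrow> v \<in> S)"

definition S_w :: "(nat \<Rightarrow> word) \<Rightarrow> word set" where
  "S_w w = \<Inter> {S. submonoid S \<and> cond_C1 w S \<and> cond_C2 w S}"

definition is_longest_prefix_in :: "word set \<Rightarrow> word \<Rightarrow> word \<Rightarrow> bool" where
  "is_longest_prefix_in S x p \<longleftrightarrow>
     prefix p x \<and> p \<in> S \<and> (\<forall>q. prefix q x \<and> q \<in> S \<longrightarrow> length q \<le> length p)"

definition is_longest_suffix_in :: "word set \<Rightarrow> word \<Rightarrow> word \<Rightarrow> bool" where
  "is_longest_suffix_in S x p \<longleftrightarrow>
     suffix p x \<and> p \<in> S \<and> (\<forall>q. suffix q x \<and> q \<in> S \<longrightarrow> length q \<le> length p)"

end

theory Submission
  imports Defs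
begin

text \<open>Only the fact that p and s lie in S_w matters, not their maximality (nor that the words
  are nonempty): a prefix and a suffix of a word either leave a nonempty gap between them, or
  they overlap (possibly in the empty word), and an overlap is exactly a factorisation excluded
  by the hypothesis.\<close>

lemma prefix_suffix_gap_or_overlap:
  assumes "prefix p x" and "suffix s x"
  shows "(\<exists>u. u \<noteq> [] \<and> x = p @ u @ s) \<or> (\<exists>q t r. x = q @ t @ r \<and> p = q @ t \<and> s = t @ r)"
proof -
  from assms obtain r q where r: "x = p @ r" and q: "x = q @ s"
    unfolding prefix_def suffix_def by blast
  show ?thesis
  proof (cases "length q \<le> length p")
    case True
    then have "take (length q) p = q"
      using r q by (metis append_eq_append_conv_if)
    then obtain t where "p = q @ t"
      by (metis append_take_drop_id)
    then have "x = q @ t @ r \<and> p = q @ t \<and> s = t @ r"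
      using r q by simp
    then show ?thesis by blast
  next
    case False
    then have "take (length p) q = p"
      using r q by (metis append_eq_append_conv_if less_or_eq_imp_le not_le take_all_iff take_append)
    then obtain u where u: "q = p @ u"
      by (metis append_take_drop_id)
    with False have "u \<noteq> []" by auto
    with q u show ?thesis by auto
  qed
qed

theorem lemma3p5:
  fixes w :: "nat \<Rightarrow> word"
  assumes nonempty: "\<And>n. w n \<noteq> []"
    and hyp: "\<And>n. \<not> (\<exists>s t v. w n = s @ t @ v \<and> s @ t \<in> S_w w \<and> t @ v \<in> S_w w)"
  shows "\<forall>n p s. is_longest_prefix_in (S_w w) (w n) p \<and> is_longest_suffix_in (S_w w) (w n) s
           \<longrightarrow> (\<exists>u. u \<noteq> [] \<and> w n = p @ u @ s)"
proof (intro allI impI)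
  fix n p s
  assume "is_longest_prefix_in (S_w w) (w n) p \<and> is_longest_suffix_in (S_w w) (w n) s"
  then have "prefix p (w n)" "p \<in> S_w w" "suffix s (w n)" "s \<in> S_w w"
    by (auto simp: is_longest_prefix_in_def is_longest_suffix_in_def)
  then show "\<exists>u. u \<noteq> [] \<and> w n = p @ u @ s"
    using prefix_suffix_gap_or_overlap hyp[of n] by blast
qed

end
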